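(* Fix $h\in\{2,\dots,H\}$ and suppose $\Psi_{h-1}$ is an $\alpha$-policy cover of $\mathcal{S}_{h-1}$ with $|\Psi_{h-1}|\le N$. Then for every $s\in\mathcal{S}_h$, $\rho_h(s)\ge\frac{\alpha\,\eta(s)}{N|\mathcal{A}|}$.
   Context: Block MDP: horizon $H$; finite latent states $\mathcal{S}=\sqcup_h\mathcal{S}_h$; countable observations $\mathcal{X}=\sqcup_h\mathcal{X}_h$; finite actions $\mathcal{A}$; start distribution $\mu$; transitions $T(\cdot\mid s,a)\in\Delta(\mathcal{S}_{h+1})$ for $s\in\mathcal{S}_h$; emissions $q(\cdot\mid s)\in\Delta(\mathcal{X}_h)$ with disjoint supports, decoder $g^\star$. Policies map $\mathcal{X}\to\Delta(\mathcal{A})$; $\Pi$ a policy class, $\Pi_{NS}=\Pi^H$ non-stationary policies. $\mathbb{P}_\pi[s]$ is the probability that $\pi$'s trajectory visits $s$; $\eta(s)=\max_{\pi\in\Pi_{NS}}\mathbb{P}_\pi[s]$. A finite set $\Psi$ of policies is an $\alpha$-policy cover of $\mathcal{S}_t$ if $\max_{\pi\in\Psi}\mathbb{P}_\pi[s]\ge\alpha\eta(s)$ for all $s\in\mathcal{S}_t$. $\rho_h(s)$ is the probability that $g^\star(x_h)=s$ when a policy $\pi$ is chosen uniformly from $\Psi_{h-1}$, followed for steps $1,\dots,h-2$ to reach $x_{h-1}$, then an action $a_{h-1}\sim\mathrm{Unf}(\mathcal{A})$ is taken. *)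

theory Defs
  imports "HOL-Probability.Probability"
begin

(* Block MDP data:
   - latent states: type 's (finite); layer s = h means s \<in> S_h
   - observations: type 'x (countable); xlayer x = h means x \<in> X_h
   - actions: type 'a (finite), A = UNIV
   - mu: start distribution, T s a: transition, q s: emission.
   A (non-stationary) policy is p :: nat \<Rightarrow> 'x \<Rightarrow> 'a pmf, p h used at step h (1-based). *)

definition block_mdp ::
  "nat \<Rightarrow> ('s::finite \<Rightarrow> nat) \<Rightarrow> ('x::countable \<Rightarrow> nat) \<Rightarrow> 's pmf
   \<Rightarrow> ('s \<Rightarrow> 'a::finite \<Rightarrow> 's pmf) \<Rightarrow> ('s \<Rightarrow> 'x pmf) \<Rightarrow> bool" where
  "block_mdp H layer xlayer mu T q \<longleftrightarrow>
     (\<forall>s. layer s \<in> {1..H}) \<and>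
     set_pmf mu \<subseteq> {s. layer s = 1} \<and>
     (\<forall>s a. layer s < H \<longrightarrow> set_pmf (T s a) \<subseteq> {s'. layer s' = layer s + 1}) \<and>
     (\<forall>s. set_pmf (q s) \<subseteq> {x. xlayer x = layer s}) \<and>
     (\<forall>s s'. s \<noteq> s' \<longrightarrow> set_pmf (q s) \<inter> set_pmf (q s') = {})"

definition decoder :: "('s \<Rightarrow> 'x pmf) \<Rightarrow> 'x \<Rightarrow> 's" where
  "decoder q x = (THE s. x \<in> set_pmf (q s))"

text \<open>Distribution of the latent state at step k+1 when following policy p.\<close>
primrec state_dist ::
  "'s pmf \<Rightarrow> ('s \<Rightarrow> 'a \<Rightarrow> 's pmf) \<Rightarrow> ('s \<Rightarrow> 'x pmf) \<Rightarrow> (nat \<Rightarrow> 'x \<Rightarrow> 'a pmf) \<Rightarrow> nat \<Rightarrow> 's pmf" where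
  "state_dist mu T q p 0 = mu"
| "state_dist mu T q p (Suc k) =
     state_dist mu T q p k \<bind> (\<lambda>s. q s \<bind> (\<lambda>x. p (Suc k) x \<bind> (\<lambda>a. T s a)))"

definition visit_prob ::
  "('s \<Rightarrow> nat) \<Rightarrow> 's pmf \<Rightarrow> ('s \<Rightarrow> 'a \<Rightarrow> 's pmf) \<Rightarrow> ('s \<Rightarrow> 'x pmf) \<Rightarrow> (nat \<Rightarrow> 'x \<Rightarrow> 'a pmf) \<Rightarrow> 's \<Rightarrow> real" where
  "visit_prob layer mu T q p s = pmf (state_dist mu T q p (layer s - 1)) s"

definition Pi_NS :: "nat \<Rightarrow> ('x \<Rightarrow> 'a pmf) set \<Rightarrow> (nat \<Rightarrow> 'x \<Rightarrow> 'a pmf) set" where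
  "Pi_NS H PolCls = {p. \<forall>h\<in>{1..H}. p h \<in> PolCls}"

text \<open>eta(s) = max over Pi_NS of P_pi[s] (taken as a supremum).\<close>
definition eta where
  "eta H PolCls layer mu T q s = (SUP p\<in>Pi_NS H PolCls. visit_prob layer mu T q p s)"

definition policy_cover where
  "policy_cover H PolCls layer mu T q Psi alpha t \<longleftrightarrow>
     finite Psi \<and> Psi \<noteq> {} \<and>
     (\<forall>s. layer s = t \<longrightarrow>
        Max ((\<lambda>p. visit_prob layer mu T q p s) ` Psi) \<ge> alpha * eta H PolCls layer mu T q s)"

text \<open>rho_h(s): p uniform from Psi, followed on steps 1..h-2, uniform action at step h-1;
  probability that the decoded observation x_h equals s.\<close>
definition rho ::
  "'s pmf \<Rightarrow> ('s \<Rightarrow> 'a::finite \<Rightarrow> 's pmf) \<Rightarrow> ('s \<Rightarrow> 'x pmf) \<Rightarrow> (nat \<Rightarrow> 'x \<Rightarrow> 'a pmf) set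
   \<Rightarrow> nat \<Rightarrow> 's \<Rightarrow> real" where
  "rho mu T q Psi h s =
     measure_pmf.prob
       (pmf_of_set Psi \<bind>
          (\<lambda>p. state_dist mu T q (p(h - 1 := (\<lambda>x. pmf_of_set UNIV))) (h - 1) \<bind> q))
       {x. decoder q x = s}"

end

theory Submission
  imports Defs
begin

(* Let c(s', s) be the mass that the transitions out of s' put on s, summed over all actions.
   As action probabilities are at most 1, every policy visits s with probability at most
   sum_s' P[s'] c(s', s) over the states s' of layer h-1; taking suprema, eta(s) is at most
   sum_s' eta(s') c(s', s). Taking a uniform action at step h-1 turns the first bound into an
   equality up to the factor 1/|A|. The cover property gives alpha eta(s') <= sum_{p in Psi} P_p[s'],
   and averaging over the |Psi| <= N policies of the cover yields the claim. *)

definition trans_mass :: "('s \<Rightarrow> 'a::finite \<Rightarrow> 's pmf) \<Rightarrow> 's \<Rightarrow> 's \<Rightarrow> real" where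
  "trans_mass T s' s = (\<Sum>a\<in>UNIV. pmf (T s' a) s)"

lemma trans_mass_nonneg: "trans_mass T s' s \<ge> 0"
  unfolding trans_mass_def by (simp add: sum_nonneg)

lemma pmf_bind_finite:
  fixes M :: "'s::finite pmf"
  shows "pmf (M \<bind> f) x = (\<Sum>s\<in>UNIV. pmf M s * pmf (f s) x)"
  unfolding pmf_bind by (subst integral_measure_pmf_real) (auto simp: mult.commute)

lemma pmf_bind_le_trans_mass:
  fixes M :: "'a::finite pmf"
  shows "pmf (M \<bind> T s') s \<le> trans_mass T s' s"
proof -
  have "pmf (M \<bind> T s') s = (\<Sum>a\<in>UNIV. pmf M a * pmf (T s' a) s)"
    by (rule pmf_bind_finite)
  also have "\<dots> \<le> trans_mass T s' s"
    unfolding trans_mass_def by (rule sum_mono) (simp add: mult_left_le_one_le pmf_le_1)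
  finally show ?thesis .
qed

lemma pmf_uniform_bind_trans_mass:
  fixes T :: "'s \<Rightarrow> 'a::finite \<Rightarrow> 's pmf"
  shows "pmf (pmf_of_set UNIV \<bind> T s') s = trans_mass T s' s / real CARD('a)"
  by (simp add: pmf_bind_pmf_of_set trans_mass_def)

lemma block_mdp_decoder_eq:
  assumes "block_mdp H layer xlayer mu T q" and "x \<in> set_pmf (q s)"
  shows "decoder q x = s"
proof -
  have "set_pmf (q s) \<inter> set_pmf (q s') = {}" if "s \<noteq> s'" for s s'
    using assms(1) that unfolding block_mdp_def by blast
  then show ?thesis
    unfolding decoder_def using assms(2) by (intro the_equality) blast+
qed

lemma block_mdp_map_decoder_bind_emission:
  assumes "block_mdp H layer xlayer mu T q"
  shows "map_pmf (decoder q) (M \<bind> q) = M"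
proof -
  have "map_pmf (decoder q) (q s) = return_pmf s" for s
  proof -
    have "map_pmf (decoder q) (q s) = map_pmf (\<lambda>_. s) (q s)"
      using block_mdp_decoder_eq[OF assms] by (intro map_pmf_cong) auto
    then show ?thesis by simp
  qed
  then show ?thesis by (simp add: map_bind_pmf bind_return_pmf')
qed

lemma state_dist_cong:
  "(\<And>j. 0 < j \<Longrightarrow> j \<le> k \<Longrightarrow> p j = p' j) \<Longrightarrow> state_dist mu T q p k = state_dist mu T q p' k"
  by (induction k) auto

lemma block_mdp_layer_transition:
  assumes "block_mdp H layer xlayer mu T q" and "layer s < H" and "s' \<in> set_pmf (T s a)"
  shows "layer s' = layer s + 1"
proof -
  have "set_pmf (T s a) \<subseteq> {s'. layer s' = layer s + 1}"
    using assms(1,2) unfolding block_mdp_def by simp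
  then show ?thesis using assms(3) by blast
qed

lemma block_mdp_layer_state_dist:
  assumes mdp: "block_mdp H layer xlayer mu T q"
  shows "k < H \<Longrightarrow> s \<in> set_pmf (state_dist mu T q p k) \<Longrightarrow> layer s = Suc k"
proof (induction k arbitrary: s)
  case 0
  then show ?case using mdp unfolding block_mdp_def by auto
next
  case (Suc k)
  from Suc.prems(2) obtain s' a
    where s': "s' \<in> set_pmf (state_dist mu T q p k)" and s: "s \<in> set_pmf (T s' a)"
    by auto
  have "layer s' = Suc k"
    using Suc.IH Suc.prems(1) s' by simp
  with Suc.prems(1) show ?case
    using block_mdp_layer_transition[OF mdp _ s] by simp
qed

lemma pmf_state_dist_Suc:
  fixes mu :: "'s::finite pmf"
  shows "pmf (state_dist mu T q p (Suc k)) s =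
     (\<Sum>s'\<in>UNIV. pmf (state_dist mu T q p k) s' *
        pmf ((q s' \<bind> p (Suc k)) \<bind> T s') s)"
  by (simp add: pmf_bind_finite bind_assoc_pmf)

lemma pmf_state_dist_Suc_le:
  fixes T :: "'s::finite \<Rightarrow> 'a::finite \<Rightarrow> 's pmf"
  shows "pmf (state_dist mu T q p (Suc k)) s \<le>
     (\<Sum>s'\<in>UNIV. pmf (state_dist mu T q p k) s' * trans_mass T s' s)"
  unfolding pmf_state_dist_Suc
  by (intro sum_mono mult_left_mono pmf_bind_le_trans_mass) simp

lemma pmf_state_dist_uniform_last_action:
  fixes T :: "'s::finite \<Rightarrow> 'a::finite \<Rightarrow> 's pmf"
  shows "pmf (state_dist mu T q (p(Suc k := (\<lambda>_. pmf_of_set UNIV))) (Suc k)) s =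
     (\<Sum>s'\<in>UNIV. pmf (state_dist mu T q p k) s' * trans_mass T s' s) / real CARD('a)"
proof -
  have "state_dist mu T q (p(Suc k := (\<lambda>_. pmf_of_set UNIV))) k = state_dist mu T q p k"
    by (rule state_dist_cong) simp
  then show ?thesis
    unfolding pmf_state_dist_Suc by (simp add: pmf_uniform_bind_trans_mass sum_divide_distrib)
qed

lemma rho_eq_sum:
  fixes T :: "'s::finite \<Rightarrow> 'a::finite \<Rightarrow> 's pmf"
  assumes mdp: "block_mdp H layer xlayer mu T q" and "finite Psi" "Psi \<noteq> {}"
  shows "rho mu T q Psi (Suc (Suc k)) s =
     (\<Sum>p\<in>Psi. \<Sum>s'\<in>UNIV. pmf (state_dist mu T q p k) s' * trans_mass T s' s)
       / (real (card Psi) * real CARD('a))"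
proof -
  define G where "G p = state_dist mu T q (p(Suc k := (\<lambda>_. pmf_of_set UNIV))) (Suc k)" for p
  have "rho mu T q Psi (Suc (Suc k)) s =
      measure_pmf.prob ((pmf_of_set Psi \<bind> G) \<bind> q) (decoder q -` {s})"
    unfolding rho_def G_def vimage_def by (simp only: diff_Suc_1 bind_assoc_pmf singleton_iff)
  also have "\<dots> = measure_pmf.prob (map_pmf (decoder q) ((pmf_of_set Psi \<bind> G) \<bind> q)) {s}"
    by (simp only: measure_map_pmf)
  also have "\<dots> = pmf (pmf_of_set Psi \<bind> G) s"
    by (simp add: block_mdp_map_decoder_bind_emission[OF mdp] measure_pmf_single)
  also have "\<dots> = (\<Sum>p\<in>Psi. pmf (G p) s) / real (card Psi)"
    using assms(2,3) by (simp add: pmf_bind_pmf_of_set)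
  also have "\<dots> = (\<Sum>p\<in>Psi. \<Sum>s'\<in>UNIV. pmf (state_dist mu T q p k) s' * trans_mass T s' s)
       / (real (card Psi) * real CARD('a))"
    unfolding G_def pmf_state_dist_uniform_last_action sum_divide_distrib[symmetric]
      divide_divide_eq_left by (simp only: mult.commute)
  finally show ?thesis .
qed

lemma Pi_NS_nonempty:
  assumes "f \<in> PolCls"
  shows "Pi_NS H PolCls \<noteq> {}"
  unfolding Pi_NS_def using assms by (auto intro!: exI[of _ "\<lambda>_. f"])

lemma visit_prob_le_eta:
  "p \<in> Pi_NS H PolCls \<Longrightarrow> visit_prob layer mu T q p s \<le> eta H PolCls layer mu T q s"
  unfolding eta_def
  by (rule cSUP_upper) (auto intro!: bdd_aboveI[of _ 1] simp: visit_prob_def pmf_le_1)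

lemma eta_nonneg:
  assumes "PolCls \<noteq> {}"
  shows "eta H PolCls layer mu T q s \<ge> 0"
proof -
  obtain p where "p \<in> Pi_NS H PolCls"
    using assms Pi_NS_nonempty by blast
  have "0 \<le> visit_prob layer mu T q p s"
    by (simp add: visit_prob_def)
  also have "\<dots> \<le> eta H PolCls layer mu T q s"
    using \<open>p \<in> Pi_NS H PolCls\<close> by (rule visit_prob_le_eta)
  finally show ?thesis .
qed

lemma eta_le_sum_prev_layer:
  assumes mdp: "block_mdp H layer xlayer mu T q" and "PolCls \<noteq> {}"
    and s: "layer s = Suc (Suc k)"
  shows "eta H PolCls layer mu T q s \<le>
     (\<Sum>s'\<in>{s'. layer s' = Suc k}. eta H PolCls layer mu T q s' * trans_mass T s' s)"
  unfolding eta_def [of _ _ _ _ _ _ s]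
proof (rule cSUP_least)
  show "Pi_NS H PolCls \<noteq> {}" using assms(2) Pi_NS_nonempty by blast
next
  fix p assume p: "p \<in> Pi_NS H PolCls"
  let ?L = "{s'. layer s' = Suc k}"
  have "layer s \<le> H" using mdp unfolding block_mdp_def by auto
  with s have "k < H" by simp
  then have outside: "pmf (state_dist mu T q p k) s' = 0" if "s' \<notin> ?L" for s'
    using block_mdp_layer_state_dist[OF mdp] that by (auto simp: set_pmf_eq)
  have "visit_prob layer mu T q p s \<le>
      (\<Sum>s'\<in>UNIV. pmf (state_dist mu T q p k) s' * trans_mass T s' s)"
    unfolding visit_prob_def s diff_Suc_1 by (rule pmf_state_dist_Suc_le)
  also have "\<dots> = (\<Sum>s'\<in>?L. pmf (state_dist mu T q p k) s' * trans_mass T s' s)"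
    by (rule sum.mono_neutral_right) (auto simp: outside)
  also have "\<dots> = (\<Sum>s'\<in>?L. visit_prob layer mu T q p s' * trans_mass T s' s)"
    by (simp add: visit_prob_def)
  also have "\<dots> \<le> (\<Sum>s'\<in>?L. eta H PolCls layer mu T q s' * trans_mass T s' s)"
    by (intro sum_mono mult_right_mono visit_prob_le_eta[OF p] trans_mass_nonneg)
  finally show "visit_prob layer mu T q p s \<le> \<dots>" .
qed

lemma policy_cover_le_sum:
  assumes "policy_cover H PolCls layer mu T q Psi alpha t" and "layer s = t"
  shows "alpha * eta H PolCls layer mu T q s \<le> (\<Sum>p\<in>Psi. visit_prob layer mu T q p s)"
proof -
  have "finite Psi" "Psi \<noteq> {}"
    and "alpha * eta H PolCls layer mu T q s \<le> Max ((\<lambda>p. visit_prob layer mu T q p s) ` Psi)"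
    using assms unfolding policy_cover_def by auto
  moreover have "Max ((\<lambda>p. visit_prob layer mu T q p s) ` Psi) \<le>
      (\<Sum>p\<in>Psi. visit_prob layer mu T q p s)"
    using \<open>finite Psi\<close> \<open>Psi \<noteq> {}\<close>
    by (auto intro!: member_le_sum simp: visit_prob_def)
  ultimately show ?thesis by linarith
qed

lemma policy_cover_rho_lower_bound:
  fixes T :: "'s::finite \<Rightarrow> 'a::finite \<Rightarrow> 's pmf"
  assumes mdp: "block_mdp H layer xlayer mu T q" and "PolCls \<noteq> {}"
    and cover: "policy_cover H PolCls layer mu T q Psi alpha (Suc k)"
    and s: "layer s = Suc (Suc k)" and "alpha \<ge> 0"
  shows "alpha * eta H PolCls layer mu T q s \<le>
     real (card Psi) * real CARD('a) * rho mu T q Psi (Suc (Suc k)) s"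
proof -
  let ?eta = "eta H PolCls layer mu T q"
  let ?D = "\<lambda>p s'. pmf (state_dist mu T q p k) s'"
  let ?L = "{s'. layer s' = Suc k}"
  have Psi: "finite Psi" "Psi \<noteq> {}"
    using cover unfolding policy_cover_def by auto
  have "alpha * ?eta s \<le> alpha * (\<Sum>s'\<in>?L. ?eta s' * trans_mass T s' s)"
    using eta_le_sum_prev_layer[OF mdp \<open>PolCls \<noteq> {}\<close> s] \<open>alpha \<ge> 0\<close>
    by (rule mult_left_mono)
  also have "\<dots> = (\<Sum>s'\<in>?L. alpha * ?eta s' * trans_mass T s' s)"
    by (simp add: sum_distrib_left mult.assoc)
  also have "\<dots> \<le> (\<Sum>s'\<in>?L. (\<Sum>p\<in>Psi. visit_prob layer mu T q p s') * trans_mass T s' s)"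
    using policy_cover_le_sum[OF cover]
    by (intro sum_mono mult_right_mono trans_mass_nonneg) simp
  also have "\<dots> = (\<Sum>s'\<in>?L. \<Sum>p\<in>Psi. ?D p s' * trans_mass T s' s)"
    by (simp add: visit_prob_def sum_distrib_right)
  also have "\<dots> \<le> (\<Sum>s'\<in>UNIV. \<Sum>p\<in>Psi. ?D p s' * trans_mass T s' s)"
    by (intro sum_mono2 sum_nonneg mult_nonneg_nonneg trans_mass_nonneg) simp_all
  also have "\<dots> = real (card Psi) * real CARD('a) * rho mu T q Psi (Suc (Suc k)) s"
    using Psi by (simp add: rho_eq_sum[OF mdp Psi] sum.swap[of _ UNIV Psi])
  finally show ?thesis .
qed

theorem mainTheorem9:
  fixes H h N :: nat and alpha :: real
    and layer :: "'s::finite \<Rightarrow> nat" and xlayer :: "'x::countable \<Rightarrow> nat"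
    and mu :: "'s pmf" and T :: "'s \<Rightarrow> 'a::finite \<Rightarrow> 's pmf" and q :: "'s \<Rightarrow> 'x pmf"
    and PolCls :: "('x \<Rightarrow> 'a pmf) set" and Psi :: "(nat \<Rightarrow> 'x \<Rightarrow> 'a pmf) set"
    and s :: 's
  assumes mdp: "block_mdp H layer xlayer mu T q"
    and Pi_ne: "PolCls \<noteq> {}"
    and h: "2 \<le> h" "h \<le> H"
    and cover: "policy_cover H PolCls layer mu T q Psi alpha (h - 1)"
    and card: "card Psi \<le> N"
    and s: "layer s = h"
  shows "rho mu T q Psi h s \<ge> alpha * eta H PolCls layer mu T q s / (real N * real CARD('a))"
proof (cases "alpha \<ge> 0")
  case False
  have "alpha * eta H PolCls layer mu T q s / (real N * real CARD('a)) \<le> 0"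
    using False eta_nonneg[OF Pi_ne] by (intro divide_nonpos_nonneg mult_nonpos_nonneg) auto
  also have "0 \<le> rho mu T q Psi h s"
    unfolding rho_def by simp
  finally show ?thesis .
next
  case True
  obtain k where hk: "h = Suc (Suc k)"
    using h(1) by (metis add_2_eq_Suc le_Suc_ex)
  have "0 < N"
    using cover card unfolding policy_cover_def by (meson card_gt_0_iff less_le_trans)
  have "alpha * eta H PolCls layer mu T q s \<le> real (card Psi) * real CARD('a) * rho mu T q Psi h s"
    using policy_cover_rho_lower_bound[OF mdp Pi_ne _ _ True] cover s unfolding hk by simp
  also have "\<dots> \<le> rho mu T q Psi h s * (real N * real CARD('a))"
    using card unfolding rho_def by (simp add: mult.commute mult_right_mono)
  finally show ?thesis
    using \<open>0 < N\<close> by (simp add: pos_divide_le_eq)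
qed

end
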